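(* Let $K$ be a field which is not absolutely algebraic. Then $K$ has a maximal subring which is integrally closed in $K$ and is a conch subring of $K$.
   Context: All rings are commutative with $1\neq0$ and subrings are unital. A field is absolutely algebraic if it is algebraic over $\mathbb{F}_p$ for some prime $p$. A maximal subring is a proper subring maximal with respect to inclusion among proper subrings. For a unit $x\in K$, a subring $V$ is a conch subring conching $x$ if $x^{-1}\in V$, $x\notin V$ and $V$ is maximal among subrings containing $x^{-1}$ but not $x$. *)

theory Defs
  imports "HOL-Computational_Algebra.Polynomial"
begin

definition subring :: "'a::comm_ring_1 set \<Rightarrow> bool" where
  "subring S \<longleftrightarrow> 1 \<in> S \<and> (\<forall>x\<in>S. \<forall>y\<in>S. x + y \<in> S \<and> x * y \<in> S \<and> - x \<in> S)"

definition maximal_subring :: "'a::comm_ring_1 set \<Rightarrow> bool" where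
  "maximal_subring S \<longleftrightarrow> subring S \<and> S \<noteq> UNIV \<and>
     (\<forall>T. subring T \<and> T \<noteq> UNIV \<and> S \<subseteq> T \<longrightarrow> T = S)"

definition integral_over :: "'a::comm_ring_1 set \<Rightarrow> 'a \<Rightarrow> bool" where
  "integral_over S x \<longleftrightarrow>
     (\<exists>p. lead_coeff p = 1 \<and> (\<forall>i. coeff p i \<in> S) \<and> poly p x = 0)"

definition integrally_closed_in_univ :: "'a::comm_ring_1 set \<Rightarrow> bool" where
  "integrally_closed_in_univ S \<longleftrightarrow> (\<forall>x. integral_over S x \<longrightarrow> x \<in> S)"

definition conching :: "'a::field set \<Rightarrow> 'a \<Rightarrow> bool" where
  "conching V x \<longleftrightarrow> x \<noteq> 0 \<and> subring V \<and> inverse x \<in> V \<and> x \<notin> V \<and>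
     (\<forall>W. subring W \<and> inverse x \<in> W \<and> x \<notin> W \<and> V \<subseteq> W \<longrightarrow> W = V)"

definition conch_subring :: "'a::field set \<Rightarrow> bool" where
  "conch_subring V \<longleftrightarrow> (\<exists>x. conching V x)"

text \<open>Algebraic over the prime field F_p (the image of the integers in K).\<close>
definition absolutely_algebraic :: "'a::field itself \<Rightarrow> bool" where
  "absolutely_algebraic _ \<longleftrightarrow> prime CHAR('a) \<and>
     (\<forall>x::'a. \<exists>p. p \<noteq> 0 \<and> (\<forall>i. coeff p i \<in> range of_int) \<and> poly p x = 0)"

end

theory Submission
  imports Defs "HOL-Computational_Algebra.Factorial_Ring"
begin

text \<open>If t lies in a subring B while t^-1 does not, Zorn's lemma gives a subring V containing B
  that is maximal with t^-1 not in V; by construction V conches t^-1. Chevalley's degree-reduction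
  argument shows that V is a valuation ring, hence integrally closed. If moreover the field is
  algebraic over B and every nonzero element of B has the form t^k (a + t h) with a a unit of B
  and h in B, then every z outside V is t^-k g with g in V, so V[t^-1] is the whole field and V is
  a maximal subring. When K is not absolutely algebraic, either char K = 0 and K is algebraic
  over Z, and B = Z, t = 2 will do; or some t is transcendental over the prime ring, and then
  B = L[t] will do for a subring L maximal with t transcendental over L: such an L is a field,
  and K is algebraic over L[t].\<close>

section \<open>Subrings and polynomials over them\<close>

definition coeffs_in :: "'a::comm_ring_1 set \<Rightarrow> 'a poly \<Rightarrow> bool" where
  "coeffs_in S p \<longleftrightarrow> (\<forall>i. coeff p i \<in> S)"

definition adjoin :: "'a::comm_ring_1 set \<Rightarrow> 'a \<Rightarrow> 'a set" where
  "adjoin S y = {poly p y | p. coeffs_in S p}"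

definition algebraic_over :: "'a::comm_ring_1 set \<Rightarrow> 'a \<Rightarrow> bool" where
  "algebraic_over S x \<longleftrightarrow> (\<exists>p. p \<noteq> 0 \<and> coeffs_in S p \<and> poly p x = 0)"

lemma subring_one: "subring S \<Longrightarrow> 1 \<in> S"
  by (simp add: subring_def)

lemma subring_add: "subring S \<Longrightarrow> x \<in> S \<Longrightarrow> y \<in> S \<Longrightarrow> x + y \<in> S"
  by (simp add: subring_def)

lemma subring_mult: "subring S \<Longrightarrow> x \<in> S \<Longrightarrow> y \<in> S \<Longrightarrow> x * y \<in> S"
  by (simp add: subring_def)

lemma subring_uminus: "subring S \<Longrightarrow> x \<in> S \<Longrightarrow> - x \<in> S"
  by (simp add: subring_def)

lemma subring_zero: "subring S \<Longrightarrow> 0 \<in> S"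
  by (metis subring_add subring_one subring_uminus add.right_inverse)

lemma subring_diff: "subring S \<Longrightarrow> x \<in> S \<Longrightarrow> y \<in> S \<Longrightarrow> x - y \<in> S"
  by (metis subring_add subring_uminus diff_conv_add_uminus)

lemma subring_power: "subring S \<Longrightarrow> x \<in> S \<Longrightarrow> x ^ n \<in> S"
  by (induct n) (auto intro: subring_one subring_mult)

lemma subring_sum: "subring S \<Longrightarrow> (\<And>i. i \<in> A \<Longrightarrow> f i \<in> S) \<Longrightarrow> sum f A \<in> S"
  by (induct A rule: infinite_finite_induct) (auto intro: subring_zero subring_add)

lemma subring_range_of_int: "subring (range (of_int :: int \<Rightarrow> 'a::comm_ring_1))"
  unfolding subring_def
  by (auto intro: range_eqI[of _ _ "_ + _"] range_eqI[of _ _ "_ * _"] range_eqI[of _ _ "- _"]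
      range_eqI[of _ _ 1])

lemma subring_Union_chain:
  assumes "C \<noteq> {}" "subset.chain A C" "\<And>S. S \<in> C \<Longrightarrow> subring S"
  shows "subring (\<Union>C)"
proof -
  obtain S0 where "S0 \<in> C"
    using assms(1) by blast
  then have "1 \<in> \<Union>C"
    using assms(3) subring_one by blast
  moreover have "x + y \<in> \<Union>C \<and> x * y \<in> \<Union>C \<and> - x \<in> \<Union>C" if xy: "x \<in> \<Union>C" "y \<in> \<Union>C" for x y
  proof -
    obtain S where "S \<in> C" "{x, y} \<subseteq> S"
      by (rule finite_subset_Union_chain[of "{x, y}" C A]) (use xy assms(1,2) in auto)
    then have "x + y \<in> S" "x * y \<in> S" "- x \<in> S"
      using assms(3)[OF \<open>S \<in> C\<close>] by (simp_all add: subring_add subring_mult subring_uminus)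
    with \<open>S \<in> C\<close> show ?thesis
      by blast
  qed
  ultimately show ?thesis
    unfolding subring_def by blast
qed

lemma ex_maximal_subring_extension:
  assumes "subring B" "P B"
    and chain: "\<And>C. C \<noteq> {} \<Longrightarrow> subset.chain {S. subring S \<and> P S} C \<Longrightarrow> P (\<Union>C)"
  obtains M where "subring M" "P M" "B \<subseteq> M" "\<And>S. subring S \<Longrightarrow> P S \<Longrightarrow> M \<subseteq> S \<Longrightarrow> S = M"
proof -
  let ?A = "{S. subring S \<and> P S \<and> B \<subseteq> S}"
  have "\<exists>M\<in>?A. \<forall>S\<in>?A. M \<subseteq> S \<longrightarrow> S = M"
  proof (rule subset_Zorn_nonempty)
    show "?A \<noteq> {}"
      using assms(1,2) by blast
    fix C assume C: "C \<noteq> {}" "subset.chain ?A C"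
    then have "C \<subseteq> ?A" "subset.chain {S. subring S \<and> P S} C"
      by (auto simp: subset.chain_def)
    with C have "subring (\<Union>C)" "P (\<Union>C)" "B \<subseteq> \<Union>C"
      using chain subring_Union_chain by blast+
    then show "\<Union>C \<in> ?A"
      by blast
  qed
  then obtain M where "M \<in> ?A" "\<forall>S\<in>?A. M \<subseteq> S \<longrightarrow> S = M" ..
  then show ?thesis
    by (intro that[of M]) auto
qed

lemma coeffs_in_pCons: "coeffs_in S (pCons a p) \<longleftrightarrow> a \<in> S \<and> coeffs_in S p"
  unfolding coeffs_in_def by (auto simp: coeff_pCons split: nat.split)

lemma coeffs_in_zero: "subring S \<Longrightarrow> coeffs_in S 0"
  by (simp add: coeffs_in_def subring_zero)

lemma coeffs_in_const: "subring S \<Longrightarrow> a \<in> S \<Longrightarrow> coeffs_in S [:a:]"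
  by (simp add: coeffs_in_pCons coeffs_in_zero)

lemma coeffs_in_monom: "subring S \<Longrightarrow> a \<in> S \<Longrightarrow> coeffs_in S (monom a n)"
  by (simp add: coeffs_in_def coeff_monom subring_zero)

lemma coeffs_in_add: "subring S \<Longrightarrow> coeffs_in S p \<Longrightarrow> coeffs_in S q \<Longrightarrow> coeffs_in S (p + q)"
  by (simp add: coeffs_in_def subring_add)

lemma coeffs_in_diff: "subring S \<Longrightarrow> coeffs_in S p \<Longrightarrow> coeffs_in S q \<Longrightarrow> coeffs_in S (p - q)"
  by (simp add: coeffs_in_def subring_diff)

lemma coeffs_in_uminus: "subring S \<Longrightarrow> coeffs_in S p \<Longrightarrow> coeffs_in S (- p)"
  by (simp add: coeffs_in_def subring_uminus)

lemma coeffs_in_mult: "subring S \<Longrightarrow> coeffs_in S p \<Longrightarrow> coeffs_in S q \<Longrightarrow> coeffs_in S (p * q)"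
  unfolding coeffs_in_def coeff_mult by (auto intro!: subring_sum subring_mult)

lemma coeffs_in_smult: "subring S \<Longrightarrow> a \<in> S \<Longrightarrow> coeffs_in S p \<Longrightarrow> coeffs_in S (smult a p)"
  by (simp add: coeffs_in_def subring_mult)

lemma coeffs_in_sum: "subring S \<Longrightarrow> (\<And>i. i \<in> A \<Longrightarrow> coeffs_in S (f i)) \<Longrightarrow> coeffs_in S (sum f A)"
  unfolding coeffs_in_def coeff_sum by (auto intro!: subring_sum)

lemma coeffs_in_reflect_poly: "subring S \<Longrightarrow> coeffs_in S p \<Longrightarrow> coeffs_in S (reflect_poly p)"
  by (simp add: coeffs_in_def coeff_reflect_poly subring_zero)

lemma coeffs_in_mono: "S \<subseteq> T \<Longrightarrow> coeffs_in S p \<Longrightarrow> coeffs_in T p"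
  unfolding coeffs_in_def by auto

lemma coeffs_in_Union_chain:
  assumes "C \<noteq> {}" "subset.chain A C" "\<And>S. S \<in> C \<Longrightarrow> subring S" "coeffs_in (\<Union>C) p"
  obtains S where "S \<in> C" "coeffs_in S p"
proof -
  obtain S where S: "S \<in> C" "coeff p ` {..degree p} \<subseteq> S"
    by (rule finite_subset_Union_chain[of "coeff p ` {..degree p}" C A])
      (use assms in \<open>auto simp: coeffs_in_def\<close>)
  have "coeff p i \<in> S" for i
    using S subring_zero[OF assms(3)[OF S(1)]] by (cases "i \<le> degree p") (auto simp: coeff_eq_0)
  then show ?thesis
    using that S(1) coeffs_in_def by blast
qed

lemma poly_in_subring: "subring S \<Longrightarrow> coeffs_in S p \<Longrightarrow> x \<in> S \<Longrightarrow> poly p x \<in> S"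
  unfolding poly_altdef coeffs_in_def by (auto intro!: subring_sum subring_mult subring_power)

lemma poly_altdef_le:
  fixes x :: "'a::comm_ring_1"
  assumes "degree p \<le> n"
  shows "poly p x = (\<Sum>i\<le>n. coeff p i * x ^ i)"
proof -
  have "(\<Sum>i\<le>degree p. coeff p i * x ^ i) = (\<Sum>i\<le>n. coeff p i * x ^ i)"
    by (rule sum.mono_neutral_left) (use assms in \<open>auto simp: coeff_eq_0\<close>)
  then show ?thesis
    by (simp add: poly_altdef)
qed

lemma poly_eq_power_mult_nonzero_const:
  fixes p :: "'a::comm_ring_1 poly"
  shows "p \<noteq> 0 \<Longrightarrow> coeffs_in S p \<Longrightarrow>
    \<exists>k q. coeffs_in S q \<and> coeff q 0 \<noteq> 0 \<and> (\<forall>x. poly p x = x ^ k * poly q x)"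
proof (induct p rule: pCons_induct)
  case (pCons a p)
  show ?case
  proof (cases "a = 0")
    case False
    then show ?thesis
      using pCons.prems by (intro exI[of _ 0] exI[of _ "pCons a p"]) auto
  next
    case True
    then obtain k q where "coeffs_in S q" "coeff q 0 \<noteq> 0" "\<forall>x. poly p x = x ^ k * poly q x"
      using pCons by (auto simp: coeffs_in_pCons)
    with True show ?thesis
      by (intro exI[of _ "Suc k"] exI[of _ q]) auto
  qed
qed simp

definition reflect_poly_deg :: "nat \<Rightarrow> 'a::comm_ring_1 poly \<Rightarrow> 'a poly" where
  "reflect_poly_deg n p = monom 1 (n - degree p) * reflect_poly p"

lemma degree_reflect_poly_deg_le:
  fixes p :: "'a::comm_ring_1 poly"
  assumes "degree p \<le> n"
  shows "degree (reflect_poly_deg n p) \<le> n"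
proof -
  have "degree (reflect_poly_deg n p) \<le> degree (monom (1::'a) (n - degree p)) + degree (reflect_poly p)"
    unfolding reflect_poly_deg_def by (rule degree_mult_le)
  also have "\<dots> \<le> (n - degree p) + degree p"
    by (intro add_mono degree_monom_le degree_reflect_poly_le)
  also have "\<dots> = n"
    using assms by simp
  finally show ?thesis .
qed

lemma poly_reflect_poly_deg:
  fixes x :: "'a::field"
  assumes "x \<noteq> 0" "degree p \<le> n"
  shows "poly (reflect_poly_deg n p) x = x ^ n * poly p (inverse x)"
proof -
  have "x ^ (n - degree p) * x ^ degree p = x ^ n"
    using assms(2) by (simp add: power_add[symmetric])
  then show ?thesis
    using assms(1) by (simp add: reflect_poly_deg_def poly_monom poly_reflect_poly_nz mult.assoc[symmetric])
qed

lemma coeffs_in_reflect_poly_deg: "subring S \<Longrightarrow> coeffs_in S p \<Longrightarrow> coeffs_in S (reflect_poly_deg n p)"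
  by (simp add: reflect_poly_deg_def coeffs_in_mult coeffs_in_monom coeffs_in_reflect_poly subring_one)

lemma poly_in_adjoin: "coeffs_in S p \<Longrightarrow> poly p y \<in> adjoin S y"
  unfolding adjoin_def by blast

lemma subring_adjoin:
  assumes "subring S"
  shows "subring (adjoin S y)"
proof -
  have "1 \<in> adjoin S y"
    using poly_in_adjoin[OF coeffs_in_const[OF assms subring_one[OF assms]]] by simp
  moreover have "a + b \<in> adjoin S y \<and> a * b \<in> adjoin S y \<and> - a \<in> adjoin S y"
    if ab: "a \<in> adjoin S y" "b \<in> adjoin S y" for a b
  proof -
    obtain p q where "coeffs_in S p" "coeffs_in S q" "a = poly p y" "b = poly q y"
      using ab unfolding adjoin_def by blast
    then have "a + b = poly (p + q) y" "a * b = poly (p * q) y" "- a = poly (- p) y"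
      by simp_all
    moreover have "coeffs_in S (p + q)" "coeffs_in S (p * q)" "coeffs_in S (- p)"
      using \<open>coeffs_in S p\<close> \<open>coeffs_in S q\<close> assms
      by (simp_all add: coeffs_in_add coeffs_in_mult coeffs_in_uminus)
    ultimately show ?thesis
      using poly_in_adjoin by metis
  qed
  ultimately show ?thesis
    unfolding subring_def by blast
qed

lemma subset_adjoin: "subring S \<Longrightarrow> S \<subseteq> adjoin S y"
proof
  fix a assume "subring S" "a \<in> S"
  then show "a \<in> adjoin S y"
    using poly_in_adjoin[OF coeffs_in_const, of S a y] by simp
qed

lemma self_in_adjoin: "subring S \<Longrightarrow> y \<in> adjoin S y"
  using poly_in_adjoin[of S "[:0, 1:]" y]
  by (simp add: coeffs_in_pCons coeffs_in_zero subring_zero subring_one)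

lemma ex_root_nonzero_const_coeff:
  fixes w :: "'a::field"
  assumes "algebraic_over B w" "w \<noteq> 0"
  obtains q where "coeffs_in B q" "coeff q 0 \<noteq> 0" "poly q w = 0"
proof -
  obtain p where "p \<noteq> 0" "coeffs_in B p" "poly p w = 0"
    using assms(1) unfolding algebraic_over_def by blast
  then obtain k q where "coeffs_in B q" "coeff q 0 \<noteq> 0" "poly p w = w ^ k * poly q w"
    using poly_eq_power_mult_nonzero_const by blast
  with \<open>poly p w = 0\<close> assms(2) show ?thesis
    using that by simp
qed

lemma const_coeff_in_root_multiples:
  assumes "subring V" "coeffs_in V q" "w \<in> V" "poly q w = 0"
  obtains g where "g \<in> V" "coeff q 0 = w * g"
proof -
  obtain c q' where q: "q = pCons c q'"
    using pCons_cases by blast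
  have "coeffs_in V q'"
    using assms(2) by (simp add: q coeffs_in_pCons)
  then have "- poly q' w \<in> V"
    using assms(1,3) by (simp add: subring_uminus poly_in_subring)
  moreover have "coeff q 0 = w * - poly q' w"
    using assms(4) by (simp add: q eq_neg_iff_add_eq_0)
  ultimately show ?thesis
    using that by blast
qed

section \<open>Subrings maximal without t^-1\<close>

lemma integrally_closed_if_valuation:
  fixes V :: "'a::field set"
  assumes V: "subring V" and valuation: "\<And>y. y \<noteq> 0 \<Longrightarrow> y \<in> V \<or> inverse y \<in> V"
  shows "integrally_closed_in_univ V"
  unfolding integrally_closed_in_univ_def integral_over_def
proof (intro allI impI)
  fix y assume "\<exists>p. lead_coeff p = 1 \<and> (\<forall>i. coeff p i \<in> V) \<and> poly p y = 0"
  then obtain p where p: "lead_coeff p = 1" "coeffs_in V p" "poly p y = 0"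
    unfolding coeffs_in_def by blast
  show "y \<in> V"
  proof (rule ccontr)
    assume "y \<notin> V"
    moreover have "y \<noteq> 0"
      using \<open>y \<notin> V\<close> subring_zero[OF V] by auto
    ultimately have "inverse y \<in> V"
      using valuation by blast
    obtain p' where p': "reflect_poly p = pCons 1 p'"
      using p(1) by (metis coeff_0_reflect_poly coeff_pCons_0 pCons_cases)
    have "coeffs_in V p'"
      using coeffs_in_reflect_poly[OF V p(2)] by (simp add: p' coeffs_in_pCons)
    have "poly (reflect_poly p) (inverse y) = 0"
      using poly_reflect_poly_nz[of "inverse y" p] \<open>y \<noteq> 0\<close> p(3) by simp
    then have "y = - poly p' (inverse y)"
      using \<open>y \<noteq> 0\<close> by (simp add: p' field_simps add_eq_0_iff)
    then show False
      using \<open>y \<notin> V\<close> subring_uminus[OF V poly_in_subring[OF V \<open>coeffs_in V p'\<close> \<open>inverse y \<in> V\<close>]]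
      by simp
  qed
qed

locale maximal_avoiding_inverse =
  fixes V :: "'a::field set" and t :: 'a
  assumes subring_V: "subring V" and t_in_V: "t \<in> V" and inverse_t_notin_V: "inverse t \<notin> V"
    and maximal: "\<And>S. subring S \<Longrightarrow> V \<subseteq> S \<Longrightarrow> inverse t \<notin> S \<Longrightarrow> S = V"
begin

lemma t_nonzero: "t \<noteq> 0"
  using inverse_t_notin_V subring_zero[OF subring_V] by auto

lemma inverse_t_in_adjoin: "y \<notin> V \<Longrightarrow> inverse t \<in> adjoin V y"
  using maximal[OF subring_adjoin[OF subring_V] subset_adjoin[OF subring_V]]
    self_in_adjoin[OF subring_V, of y] by blast

lemma nonunit_power_in_t_multiples:
  assumes "s \<in> V" "s \<noteq> 0" "inverse s \<notin> V"
  obtains n v where "v \<in> V" "s ^ n = t * v"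
proof -
  obtain p where p: "coeffs_in V p" "poly p (inverse s) = inverse t"
    using inverse_t_in_adjoin[OF assms(3)] by (auto simp: adjoin_def)
  have "s ^ degree p = t * poly (reflect_poly p) s"
    using poly_reflect_poly_nz[OF assms(2), of p] p(2) t_nonzero by simp
  moreover have "poly (reflect_poly p) s \<in> V"
    using poly_in_subring[OF subring_V coeffs_in_reflect_poly[OF subring_V p(1)] assms(1)] .
  ultimately show ?thesis
    using that by blast
qed

lemma one_plus_t_mult_power: "v \<in> V \<Longrightarrow> \<exists>z\<in>V. (1 + t * v) ^ n = 1 + t * z"
proof (induct n)
  case 0
  then show ?case
    using subring_zero[OF subring_V] by force
next
  case (Suc n)
  then obtain z where "z \<in> V" "(1 + t * v) ^ n = 1 + t * z"
    by blast
  then have "(1 + t * v) ^ Suc n = 1 + t * (z + v + t * z * v)"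
    by (simp add: algebra_simps)
  moreover have "z + v + t * z * v \<in> V"
    using \<open>z \<in> V\<close> Suc.prems t_in_V subring_V by (simp add: subring_add subring_mult)
  ultimately show ?case
    by blast
qed

lemma one_plus_t_mult_nonzero:
  assumes "v \<in> V"
  shows "1 + t * v \<noteq> 0"
proof
  assume "1 + t * v = 0"
  then have "inverse t = - v"
    using t_nonzero by (simp add: field_simps add_eq_0_iff)
  then show False
    using inverse_t_notin_V subring_uminus[OF subring_V assms] by simp
qed

text \<open>Every power of 1 + t v lies in 1 + t V, so none lies in t V: otherwise t^-1 would be in V.\<close>
lemma inverse_one_plus_t_mult_in_V:
  assumes "v \<in> V"
  shows "inverse (1 + t * v) \<in> V"
proof (rule ccontr)
  assume "inverse (1 + t * v) \<notin> V"
  moreover have "1 + t * v \<in> V"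
    using assms t_in_V subring_V by (simp add: subring_add subring_mult subring_one)
  ultimately obtain n w where "w \<in> V" "(1 + t * v) ^ n = t * w"
    using nonunit_power_in_t_multiples one_plus_t_mult_nonzero[OF assms] by blast
  moreover obtain z where "z \<in> V" "(1 + t * v) ^ n = 1 + t * z"
    using one_plus_t_mult_power[OF assms] by blast
  ultimately have "inverse t = w - z"
    using t_nonzero by (simp add: field_simps)
  then show False
    using inverse_t_notin_V subring_diff[OF subring_V \<open>w \<in> V\<close> \<open>z \<in> V\<close>] by simp
qed

lemma inverse_unit_plus_t_mult_in_V:
  assumes "a \<in> V" "a \<noteq> 0" "inverse a \<in> V" "h \<in> V"
  shows "inverse (a + t * h) \<in> V"
proof -
  have "inverse (a + t * h) = inverse a * inverse (1 + t * (h * inverse a))"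
    using assms(2) by (simp add: field_simps)
  moreover have "inverse (1 + t * (h * inverse a)) \<in> V"
    using assms(3,4) subring_V by (simp add: inverse_one_plus_t_mult_in_V subring_mult)
  ultimately show ?thesis
    using assms(3) subring_V by (simp add: subring_mult)
qed

text \<open>Chevalley's argument: if t^-1 is a polynomial over V both in y and in y^-1, the expression
  of larger degree can be shortened using the other one, down to degree 0, i.e. t^-1 in V.\<close>
definition inverse_t_poly_deg_le :: "'a \<Rightarrow> nat \<Rightarrow> bool" where
  "inverse_t_poly_deg_le y n \<longleftrightarrow> (\<exists>q. degree q \<le> n \<and> coeffs_in V q \<and> poly q y = inverse t)"

lemma not_inverse_t_poly_deg_le_0: "\<not> inverse_t_poly_deg_le y 0"
proof
  assume "inverse_t_poly_deg_le y 0"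
  then obtain q where "degree q = 0" "coeffs_in V q" "poly q y = inverse t"
    unfolding inverse_t_poly_deg_le_def by blast
  moreover have "poly q y = coeff q 0"
    using \<open>degree q = 0\<close> by (simp add: poly_altdef)
  ultimately show False
    using inverse_t_notin_V unfolding coeffs_in_def by metis
qed

text \<open>Multiply t^-1 = b + y^-1 r'(y^-1) by t y^(n+1) and divide by the unit 1 - t b.\<close>
lemma power_eq_poly_lower_degree:
  assumes "inverse_t_poly_deg_le (inverse y) m" "m \<le> Suc n" "y \<noteq> 0"
  obtains s where "degree s \<le> n" "coeffs_in V s" "poly s y = y ^ Suc n"
proof -
  obtain r where r: "degree r \<le> m" "coeffs_in V r" "poly r (inverse y) = inverse t"
    using assms(1) unfolding inverse_t_poly_deg_le_def by blast
  obtain b r' where r': "r = pCons b r'"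
    using pCons_cases by blast
  have "b \<in> V" "coeffs_in V r'" "degree r' \<le> n"
    using r(1,2) assms(2) by (auto simp: r' coeffs_in_pCons degree_pCons_eq_if split: if_splits)
  define u where "u = inverse (1 - t * b)"
  have "u \<in> V" "1 - t * b \<noteq> 0"
    using inverse_one_plus_t_mult_in_V[of "- b"] one_plus_t_mult_nonzero[of "- b"]
      subring_uminus[OF subring_V \<open>b \<in> V\<close>]
    by (simp_all add: u_def)
  define s where "s = smult (t * u) (reflect_poly_deg n r')"
  have "degree s \<le> n"
    unfolding s_def using degree_reflect_poly_deg_le[OF \<open>degree r' \<le> n\<close>]
    by (rule order_trans[OF degree_smult_le])
  moreover have "coeffs_in V s"
    unfolding s_def using subring_V t_in_V \<open>u \<in> V\<close> \<open>coeffs_in V r'\<close>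
    by (simp add: coeffs_in_smult coeffs_in_reflect_poly_deg subring_mult)
  moreover have "poly s y = y ^ Suc n"
  proof -
    have "poly s y = t * u * y ^ Suc n * (inverse y * poly r' (inverse y))"
      using \<open>y \<noteq> 0\<close> \<open>degree r' \<le> n\<close> by (simp add: s_def poly_reflect_poly_deg field_simps)
    also have "\<dots> = t * u * y ^ Suc n * (inverse t - b)"
      using r(3) by (simp add: r' eq_diff_eq add.commute)
    also have "\<dots> = u * (1 - t * b) * y ^ Suc n"
      using t_nonzero by (simp add: field_simps)
    also have "\<dots> = y ^ Suc n"
      using \<open>1 - t * b \<noteq> 0\<close> by (simp add: u_def)
    finally show ?thesis .
  qed
  ultimately show ?thesis
    using that by blast
qed

lemma inverse_t_poly_deg_le_decrease:
  assumes "inverse_t_poly_deg_le y (Suc n)" "inverse_t_poly_deg_le (inverse y) m" "m \<le> Suc n"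
    "y \<noteq> 0"
  shows "inverse_t_poly_deg_le y n"
proof -
  obtain q where q: "degree q \<le> Suc n" "coeffs_in V q" "poly q y = inverse t"
    using assms(1) unfolding inverse_t_poly_deg_le_def by blast
  obtain s where s: "degree s \<le> n" "coeffs_in V s" "poly s y = y ^ Suc n"
    using power_eq_poly_lower_degree[OF assms(2-4)] .
  define a where "a = coeff q (Suc n)"
  have "a \<in> V"
    using q(2) by (simp add: a_def coeffs_in_def)
  define q' where "q' = q - monom a (Suc n) + smult a s"
  have "poly q' y = inverse t"
    using q(3) s(3) by (simp add: q'_def poly_monom)
  moreover have "coeffs_in V q'"
    unfolding q'_def using subring_V \<open>a \<in> V\<close> q(2) s(2)
    by (simp add: coeffs_in_add coeffs_in_diff coeffs_in_monom coeffs_in_smult)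
  moreover have "degree q' \<le> n"
  proof (rule degree_le, intro allI impI)
    fix i assume "n < i"
    then have "coeff s i = 0" "i \<noteq> Suc n \<Longrightarrow> coeff q i = 0"
      using s(1) q(1) by (auto intro: coeff_eq_0)
    then show "coeff q' i = 0"
      by (simp add: q'_def a_def coeff_monom)
  qed
  ultimately show ?thesis
    unfolding inverse_t_poly_deg_le_def by blast
qed

lemma not_inverse_t_poly_deg_le_both:
  "y \<noteq> 0 \<Longrightarrow> inverse_t_poly_deg_le y n \<Longrightarrow> inverse_t_poly_deg_le (inverse y) m \<Longrightarrow> False"
proof (induction "n + m" arbitrary: y n m rule: less_induct)
  case less
  show False
  proof (cases "m \<le> n")
    case True
    obtain n' where "n = Suc n'"
      by (metis less.prems(2) not_inverse_t_poly_deg_le_0 not0_implies_Suc)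
    with True less show False
      using inverse_t_poly_deg_le_decrease[of y n' m] by force
  next
    case False
    then obtain m' where "m = Suc m'"
      using not0_implies_Suc by force
    with False less show False
      using inverse_t_poly_deg_le_decrease[of "inverse y" m' n] by force
  qed
qed

lemma valuation: "y \<noteq> 0 \<Longrightarrow> y \<in> V \<or> inverse y \<in> V"
proof (rule ccontr)
  assume "y \<noteq> 0" "\<not> (y \<in> V \<or> inverse y \<in> V)"
  then have "inverse t \<in> adjoin V y" "inverse t \<in> adjoin V (inverse y)"
    using inverse_t_in_adjoin by auto
  moreover have "\<exists>n. inverse_t_poly_deg_le z n" if z: "inverse t \<in> adjoin V z" for z
  proof -
    obtain p where "coeffs_in V p" "poly p z = inverse t"
      using z by (auto simp: adjoin_def)
    then show ?thesis
      unfolding inverse_t_poly_deg_le_def by (intro exI[of _ "degree p"] exI[of _ p]) simp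
  qed
  ultimately show False
    using not_inverse_t_poly_deg_le_both \<open>y \<noteq> 0\<close> by blast
qed

lemma integrally_closed: "integrally_closed_in_univ V"
  by (rule integrally_closed_if_valuation[OF subring_V valuation])

lemma conch_subring: "conch_subring V"
  unfolding conch_subring_def conching_def
  using t_nonzero subring_V t_in_V inverse_t_notin_V maximal by (intro exI[of _ "inverse t"]) auto

lemma ex_inverse_t_power_mult:
  assumes "B \<subseteq> V" "\<And>w. algebraic_over B w"
    and units: "\<And>c. c \<in> B \<Longrightarrow> c \<noteq> 0 \<Longrightarrow>
      \<exists>k a h. a \<in> B \<and> a \<noteq> 0 \<and> inverse a \<in> B \<and> h \<in> B \<and> c = t ^ k * (a + t * h)"
  shows "\<exists>k. \<exists>g\<in>V. z = inverse t ^ k * g"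
proof (cases "z \<in> V")
  case True
  then show ?thesis
    by (intro exI[of _ 0]) auto
next
  case False
  then have "z \<noteq> 0"
    using subring_zero[OF subring_V] by auto
  with False have "inverse z \<in> V"
    using valuation by blast
  obtain q where q: "coeffs_in B q" "coeff q 0 \<noteq> 0" "poly q (inverse z) = 0"
    using ex_root_nonzero_const_coeff assms(2) \<open>z \<noteq> 0\<close> by (metis inverse_nonzero_iff_nonzero)
  obtain g where "g \<in> V" "coeff q 0 = inverse z * g"
    using const_coeff_in_root_multiples[OF subring_V coeffs_in_mono[OF assms(1) q(1)]
        \<open>inverse z \<in> V\<close> q(3)] .
  moreover obtain l a h where akh: "a \<in> B" "a \<noteq> 0" "inverse a \<in> B" "h \<in> B"
    "coeff q 0 = t ^ l * (a + t * h)"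
    using units q(1,2) by (metis coeffs_in_def)
  ultimately have "z = inverse t ^ l * (g * inverse (a + t * h))"
    using \<open>z \<noteq> 0\<close> q(2) by (simp add: field_simps power_inverse)
  moreover have "inverse (a + t * h) \<in> V"
    using akh(1-4) assms(1) by (intro inverse_unit_plus_t_mult_in_V) auto
  ultimately show ?thesis
    using subring_mult[OF subring_V \<open>g \<in> V\<close>] by blast
qed

lemma maximal_subringI:
  assumes "\<And>z. \<exists>k. \<exists>g\<in>V. z = inverse t ^ k * g"
  shows "maximal_subring V"
  unfolding maximal_subring_def
proof (intro conjI allI impI)
  show "subring V"
    by (rule subring_V)
  show "V \<noteq> UNIV"
    using inverse_t_notin_V by auto
  fix T assume T: "subring T \<and> T \<noteq> UNIV \<and> V \<subseteq> T"
  show "T = V"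
  proof (cases "inverse t \<in> T")
    case True
    have "z \<in> T" for z
      using assms[of z] True T subring_mult subring_power by blast
    with T show ?thesis
      by auto
  next
    case False
    with T show ?thesis
      using maximal by blast
  qed
qed

end

lemma ex_maximal_avoiding_inverse:
  assumes "subring B" "t \<in> B" "inverse t \<notin> B"
  obtains V where "B \<subseteq> V" "maximal_avoiding_inverse V t"
proof -
  obtain V where "subring V" "inverse t \<notin> V" "B \<subseteq> V"
    and max: "\<And>S. subring S \<Longrightarrow> inverse t \<notin> S \<Longrightarrow> V \<subseteq> S \<Longrightarrow> S = V"
    by (rule ex_maximal_subring_extension[of B "\<lambda>S. inverse t \<notin> S"])
      (use assms in \<open>auto simp: subset.chain_def\<close>)
  moreover have "maximal_avoiding_inverse V t"
    unfolding maximal_avoiding_inverse_def using calculation assms(2) max by blast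
  ultimately show ?thesis
    using that by blast
qed

lemma ex_maximal_conch_subring_from_base:
  fixes B :: "'a::field set"
  assumes "subring B" "t \<in> B" "inverse t \<notin> B"
    and "\<And>w. algebraic_over B w"
    and "\<And>c. c \<in> B \<Longrightarrow> c \<noteq> 0 \<Longrightarrow>
      \<exists>k a h. a \<in> B \<and> a \<noteq> 0 \<and> inverse a \<in> B \<and> h \<in> B \<and> c = t ^ k * (a + t * h)"
  shows "\<exists>R::'a set. maximal_subring R \<and> integrally_closed_in_univ R \<and> conch_subring R"
proof -
  obtain V where "B \<subseteq> V" "maximal_avoiding_inverse V t"
    using ex_maximal_avoiding_inverse[OF assms(1-3)] .
  then interpret maximal_avoiding_inverse V t
    by simp
  have "maximal_subring V"
    using maximal_subringI ex_inverse_t_power_mult[OF \<open>B \<subseteq> V\<close> assms(4,5)]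
    by blast
  then show ?thesis
    using integrally_closed conch_subring by blast
qed

section \<open>Subrings maximal with t transcendental\<close>

lemma algebraic_over_self: "subring S \<Longrightarrow> w \<in> S \<Longrightarrow> algebraic_over S w"
  unfolding algebraic_over_def
  by (intro exI[of _ "[:- w, 1:]"]) (simp add: coeffs_in_pCons coeffs_in_zero subring_uminus subring_one)

lemma coeffs_in_adjoinE:
  assumes "coeffs_in (adjoin L y) p"
  obtains q where "\<And>i. coeffs_in L (q i)" "\<And>i. poly (q i) y = coeff p i"
proof -
  have "\<forall>i. \<exists>r. coeffs_in L r \<and> poly r y = coeff p i"
  proof
    fix i
    have "coeff p i \<in> adjoin L y"
      using assms by (simp add: coeffs_in_def)
    then show "\<exists>r. coeffs_in L r \<and> poly r y = coeff p i"
      unfolding adjoin_def by auto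
  qed
  then show ?thesis
    using that by metis
qed

lemma algebraic_over_if_adjoin_inverse:
  fixes a t :: "'a::field"
  assumes L: "subring L" and a: "a \<in> L" "a \<noteq> 0" and alg: "algebraic_over (adjoin L (inverse a)) t"
  shows "algebraic_over L t"
proof -
  obtain p where p: "p \<noteq> 0" "coeffs_in (adjoin L (inverse a)) p" "poly p t = 0"
    using alg unfolding algebraic_over_def by blast
  obtain q where q: "\<And>i. coeffs_in L (q i)" "\<And>i. poly (q i) (inverse a) = coeff p i"
    using coeffs_in_adjoinE[OF p(2)] by blast
  define D where "D = (\<Sum>i\<le>degree p. degree (q i))"
  have "coeff (smult (a ^ D) p) i \<in> L" for i
  proof (cases "i \<le> degree p")
    case True
    then have "degree (q i) \<le> D"
      unfolding D_def by (intro member_le_sum) auto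
    then have "coeff (smult (a ^ D) p) i = poly (reflect_poly_deg D (q i)) a"
      using a(2) by (simp add: poly_reflect_poly_deg q(2))
    then show ?thesis
      using L a(1) q(1) by (simp add: poly_in_subring coeffs_in_reflect_poly_deg)
  next
    case False
    then show ?thesis
      using subring_zero[OF L] by (simp add: coeff_eq_0)
  qed
  then have "coeffs_in L (smult (a ^ D) p)"
    by (simp add: coeffs_in_def)
  moreover have "smult (a ^ D) p \<noteq> 0" "poly (smult (a ^ D) p) t = 0"
    using p(1,3) a(2) by simp_all
  ultimately show ?thesis
    unfolding algebraic_over_def by blast
qed

lemma bivariate_poly_eval_swap:
  fixes q :: "nat \<Rightarrow> 'a::comm_ring_1 poly"
  assumes "\<And>i. i \<le> n \<Longrightarrow> degree (q i) \<le> D"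
  shows "(\<Sum>j\<le>D. poly (\<Sum>i\<le>n. monom (coeff (q i) j) i) t * w ^ j) = (\<Sum>i\<le>n. poly (q i) w * t ^ i)"
proof -
  have "(\<Sum>j\<le>D. poly (\<Sum>i\<le>n. monom (coeff (q i) j) i) t * w ^ j) =
      (\<Sum>j\<le>D. \<Sum>i\<le>n. coeff (q i) j * t ^ i * w ^ j)"
    by (simp add: poly_sum poly_monom sum_distrib_right)
  also have "\<dots> = (\<Sum>i\<le>n. \<Sum>j\<le>D. coeff (q i) j * w ^ j * t ^ i)"
    by (subst sum.swap) (simp add: mult_ac)
  also have "\<dots> = (\<Sum>i\<le>n. poly (q i) w * t ^ i)"
    by (intro sum.cong refl) (simp add: poly_altdef_le[OF assms] sum_distrib_right)
  finally show ?thesis .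
qed

text \<open>Read p(t) = 0, with coefficients q_i(w) in L[w], as a polynomial in w over L[t].\<close>
lemma algebraic_over_adjoin_exchange:
  assumes L: "subring L" and t: "\<not> algebraic_over L t" and alg: "algebraic_over (adjoin L w) t"
  shows "algebraic_over (adjoin L t) w"
proof -
  obtain p where p: "p \<noteq> 0" "coeffs_in (adjoin L w) p" "poly p t = 0"
    using alg unfolding algebraic_over_def by blast
  obtain q where q: "\<And>i. coeffs_in L (q i)" "\<And>i. poly (q i) w = coeff p i"
    using coeffs_in_adjoinE[OF p(2)] by blast
  define n where "n = degree p"
  define D where "D = (\<Sum>i\<le>n. degree (q i))"
  have deg_q: "degree (q i) \<le> D" if "i \<le> n" for i
    unfolding D_def using that by (intro member_le_sum) auto
  define R where "R j = (\<Sum>i\<le>n. monom (coeff (q i) j) i)" for j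
  have "coeffs_in L (R j)" for j
    unfolding R_def using q(1) L by (intro coeffs_in_sum coeffs_in_monom) (auto simp: coeffs_in_def)
  define P where "P = (\<Sum>j\<le>D. monom (poly (R j) t) j)"
  have "coeffs_in (adjoin L t) P"
    unfolding P_def using subring_adjoin[OF L] poly_in_adjoin[OF \<open>coeffs_in L (R _)\<close>]
    by (intro coeffs_in_sum coeffs_in_monom) auto
  moreover have "poly P w = poly p t"
    using bivariate_poly_eval_swap[of n q D t w, OF deg_q]
    by (simp add: P_def R_def poly_sum poly_monom q(2) poly_altdef[of p t] n_def)
  moreover have "P \<noteq> 0"
  proof
    assume "P = 0"
    define j where "j = degree (q n)"
    have "q n \<noteq> 0"
      using q(2)[of n] p(1) by (auto simp: n_def)
    then have "R j \<noteq> 0"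
      by (metis R_def coeff_sum_monom j_def order_refl leading_coeff_0_iff coeff_0)
    then have "poly (R j) t \<noteq> 0"
      using t \<open>coeffs_in L (R j)\<close> unfolding algebraic_over_def by blast
    moreover have "coeff P j = poly (R j) t"
      unfolding P_def using deg_q[of n] by (simp add: coeff_sum_monom j_def)
    ultimately show False
      using \<open>P = 0\<close> by simp
  qed
  ultimately show ?thesis
    using p(3) unfolding algebraic_over_def by auto
qed

lemma adjoin_nonzero_eq_power_mult:
  assumes "c \<in> adjoin L t" "c \<noteq> 0"
  obtains k a h where "a \<in> L" "a \<noteq> 0" "h \<in> adjoin L t" "c = t ^ k * (a + t * h)"
proof -
  obtain f where f: "coeffs_in L f" "c = poly f t"
    using assms(1) unfolding adjoin_def by blast
  then have "f \<noteq> 0"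
    using assms(2) by auto
  then obtain k f' where f': "coeffs_in L f'" "coeff f' 0 \<noteq> 0" "\<forall>x. poly f x = x ^ k * poly f' x"
    using poly_eq_power_mult_nonzero_const f(1) by blast
  obtain a h where f'_eq: "f' = pCons a h"
    using pCons_cases by blast
  have "a \<in> L" "a \<noteq> 0" "coeffs_in L h"
    using f'(1,2) by (simp_all add: f'_eq coeffs_in_pCons)
  moreover have "c = t ^ k * (a + t * poly h t)"
    using f(2) f'(3) by (simp add: f'_eq)
  ultimately show ?thesis
    using that poly_in_adjoin by blast
qed

lemma inverse_notin_adjoin_if_transcendental:
  fixes t :: "'a::field"
  assumes L: "subring L" and t: "\<not> algebraic_over L t"
  shows "inverse t \<notin> adjoin L t"
proof
  assume "inverse t \<in> adjoin L t"
  then obtain f where f: "coeffs_in L f" "poly f t = inverse t"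
    by (auto simp: adjoin_def)
  have "t \<noteq> 0"
    using t algebraic_over_self[OF L subring_zero[OF L]] by blast
  then have "poly (pCons (- 1) f) t = 0"
    using f(2) by simp
  moreover have "coeffs_in L (pCons (- 1) f)"
    using f(1) L by (simp add: coeffs_in_pCons subring_uminus subring_one)
  moreover have "pCons (- 1) f \<noteq> 0"
    by simp
  ultimately show False
    using t unfolding algebraic_over_def by blast
qed

lemma algebraic_over_Union_chain:
  assumes "C \<noteq> {}" "subset.chain A C" "\<And>S. S \<in> C \<Longrightarrow> subring S" "algebraic_over (\<Union>C) t"
  obtains S where "S \<in> C" "algebraic_over S t"
proof -
  obtain p where p: "p \<noteq> 0" "coeffs_in (\<Union>C) p" "poly p t = 0"
    using assms(4) unfolding algebraic_over_def by blast
  obtain S where "S \<in> C" "coeffs_in S p"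
    using coeffs_in_Union_chain[OF assms(1-3) p(2)] by blast
  with p show ?thesis
    using that unfolding algebraic_over_def by blast
qed

locale maximal_transcendental =
  fixes L :: "'a::field set" and t :: 'a
  assumes subring_L: "subring L" and transcendental: "\<not> algebraic_over L t"
    and maximal: "\<And>S. subring S \<Longrightarrow> \<not> algebraic_over S t \<Longrightarrow> L \<subseteq> S \<Longrightarrow> S = L"
begin

lemma in_L_if_transcendental_over_adjoin: "\<not> algebraic_over (adjoin L y) t \<Longrightarrow> y \<in> L"
  using maximal[OF subring_adjoin[OF subring_L] _ subset_adjoin[OF subring_L]]
    self_in_adjoin[OF subring_L, of y] by blast

lemma inverse_in_L: "a \<in> L \<Longrightarrow> a \<noteq> 0 \<Longrightarrow> inverse a \<in> L"
  using algebraic_over_if_adjoin_inverse[OF subring_L] transcendental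
    in_L_if_transcendental_over_adjoin by blast

lemma algebraic_over_adjoin_t: "algebraic_over (adjoin L t) w"
proof (rule ccontr)
  assume "\<not> algebraic_over (adjoin L t) w"
  then have "w \<in> L"
    using algebraic_over_adjoin_exchange[OF subring_L transcendental]
      in_L_if_transcendental_over_adjoin by blast
  then show False
    using \<open>\<not> algebraic_over (adjoin L t) w\<close> subset_adjoin[OF subring_L, of t]
      algebraic_over_self[OF subring_adjoin[OF subring_L]] by blast
qed

lemma ex_maximal_conch_subring:
  "\<exists>R::'a set. maximal_subring R \<and> integrally_closed_in_univ R \<and> conch_subring R"
proof (rule ex_maximal_conch_subring_from_base[of "adjoin L t" t])
  show "subring (adjoin L t)" "t \<in> adjoin L t"
    using subring_L by (simp_all add: subring_adjoin self_in_adjoin)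
  show "inverse t \<notin> adjoin L t"
    using inverse_notin_adjoin_if_transcendental subring_L transcendental .
  show "algebraic_over (adjoin L t) w" for w
    by (rule algebraic_over_adjoin_t)
  fix c assume "c \<in> adjoin L t" "c \<noteq> 0"
  then obtain k a h where "a \<in> L" "a \<noteq> 0" "h \<in> adjoin L t" "c = t ^ k * (a + t * h)"
    using adjoin_nonzero_eq_power_mult by blast
  then show "\<exists>k a h. a \<in> adjoin L t \<and> a \<noteq> 0 \<and> inverse a \<in> adjoin L t \<and> h \<in> adjoin L t \<and>
      c = t ^ k * (a + t * h)"
    using inverse_in_L[of a] subset_adjoin[OF subring_L, of t] by blast
qed

end

lemma ex_maximal_transcendental:
  fixes t :: "'a::field"
  assumes "subring B" "\<not> algebraic_over B t"
  obtains L where "B \<subseteq> L" "maximal_transcendental L t"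
proof -
  have chain: "\<not> algebraic_over (\<Union>C) t"
    if "C \<noteq> {}" "subset.chain {S. subring S \<and> \<not> algebraic_over S t} C" for C
    using algebraic_over_Union_chain[OF that] that(2) by (auto simp: subset.chain_def)
  obtain L where "subring L" "\<not> algebraic_over L t" "B \<subseteq> L"
    and max: "\<And>S. subring S \<Longrightarrow> \<not> algebraic_over S t \<Longrightarrow> L \<subseteq> S \<Longrightarrow> S = L"
    by (rule ex_maximal_subring_extension[of B "\<lambda>S. \<not> algebraic_over S t"]) (use assms chain in blast)+
  moreover have "maximal_transcendental L t"
    unfolding maximal_transcendental_def using calculation max by blast
  ultimately show ?thesis
    using that by blast
qed

section \<open>Fields that are not absolutely algebraic\<close>

lemma of_int_eq_0_iff_if_CHAR_0:
  assumes "CHAR('a::ring_1) = 0"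
  shows "(of_int n :: 'a) = 0 \<longleftrightarrow> n = 0"
  by (simp add: of_int_eq_0_iff_char_dvd assms)

lemma inverse_two_notin_range_of_int:
  assumes "CHAR('a::field) = 0"
  shows "inverse (2::'a) \<notin> range of_int"
proof
  assume "inverse (2::'a) \<in> range of_int"
  then obtain n where "inverse (2::'a) = of_int n"
    by auto
  moreover have "(2::'a) \<noteq> 0"
    using of_int_eq_0_iff_if_CHAR_0[OF assms, of 2] by simp
  ultimately have "(of_int (2 * n - 1) :: 'a) = 0"
    by (simp add: field_simps)
  then have "2 * n - 1 = 0"
    by (simp only: of_int_eq_0_iff_if_CHAR_0[OF assms])
  then show False
    by presburger
qed

lemma ex_maximal_conch_subring_char_0_algebraic:
  assumes "CHAR('a::field) = 0" and "\<And>x::'a. algebraic_over (range of_int) x"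
  shows "\<exists>R::'a set. maximal_subring R \<and> integrally_closed_in_univ R \<and> conch_subring R"
proof (rule ex_maximal_conch_subring_from_base[of "range of_int" 2])
  show "subring (range (of_int :: int \<Rightarrow> 'a))"
    by (rule subring_range_of_int)
  show "(2::'a) \<in> range of_int"
    by (metis of_int_numeral rangeI)
  show "inverse (2::'a) \<notin> range of_int"
    using inverse_two_notin_range_of_int[OF assms(1)] .
  show "algebraic_over (range of_int) w" for w :: 'a
    by (rule assms(2))
  fix c :: 'a assume "c \<in> range of_int" "c \<noteq> 0"
  then obtain n where "c = of_int n" "n \<noteq> 0"
    using of_int_eq_0_iff_if_CHAR_0[OF assms(1)] by auto
  moreover obtain k y where "n = 2 ^ k * y" "odd y"
    by (rule multiplicity_decompose'[OF \<open>n \<noteq> 0\<close>, of 2]) (auto intro: that)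
  moreover obtain m where "y = 2 * m + 1"
    using \<open>odd y\<close> by (rule oddE)
  ultimately have "c = 2 ^ k * (1 + 2 * of_int m)"
    by simp
  then show "\<exists>k a h. a \<in> range of_int \<and> a \<noteq> 0 \<and> inverse a \<in> range of_int \<and> h \<in> range of_int \<and>
      c = 2 ^ k * (a + 2 * h)"
    by (intro exI[of _ k] exI[of _ 1] exI[of _ "of_int m"]) (auto intro: range_eqI[of _ _ 1])
qed

theorem corollary2p3:
  assumes "\<not> absolutely_algebraic TYPE('a::field)"
  shows "\<exists>R::'a set. maximal_subring R \<and> integrally_closed_in_univ R \<and> conch_subring R"
proof (cases "\<forall>x::'a. algebraic_over (range of_int) x")
  case True
  with assms have "\<not> prime CHAR('a)"
    unfolding absolutely_algebraic_def algebraic_over_def coeffs_in_def by blast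
  then have "CHAR('a) = 0"
    using prime_CHAR_semidom by blast
  with True show ?thesis
    using ex_maximal_conch_subring_char_0_algebraic by blast
next
  case False
  then obtain t :: 'a where "\<not> algebraic_over (range of_int) t"
    by blast
  then obtain L where "maximal_transcendental L t"
    using ex_maximal_transcendental[OF subring_range_of_int] by blast
  then show ?thesis
    by (rule maximal_transcendental.ex_maximal_conch_subring)
qed

end
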